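(* Let $N\ge 2$ be an integer and $\tau>0$. For $t\in\{0,\tau,2\tau,\dots\}$ let $u_j^t=u(j,t)$, $j=0,\dots,N$, be defined by prescribed initial values $u(j,0)$, the Dirichlet boundary condition $u_0^t=u_N^t=0$ for all $t$ (in particular $u(0,0)=u(N,0)=0$), and the iteration, for $j=1,\dots,N-1$, $$u_j^{t+\tau}=u_j^t+\frac{u_j^tu_{j-1}^t}{2}\bigl(u_j^t+u_{j-1}^t-1\bigr)\bigl(u_{j-1}^t-u_j^t\bigr)+\frac{u_j^tu_{j+1}^t}{2}\bigl(u_j^t+u_{j+1}^t-1\bigr)\bigl(u_{j+1}^t-u_j^t\bigr).$$ Suppose $1/2\le u(j,0)\le 1$ for $j=1,\dots,N-1$. Then for every $j=1,\dots,N-1$, $$\lim_{t\to\infty}u(j,t)=\frac{1}{N-1}\sum_{i=1}^{N-1}u(i,0).$$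
   Context: Aggregation–diffusion lattice model on the grid points $x_j=j/N$ with time step $\tau$; the limit is taken along $t\in\{0,\tau,2\tau,\dots\}$. *)

theory Defs
  imports Complex_Main
begin

definition lattice_step :: "(nat \<Rightarrow> real) \<Rightarrow> nat \<Rightarrow> real" where
  "lattice_step v j =
     v j
     + v j * v (j - 1) / 2 * (v j + v (j - 1) - 1) * (v (j - 1) - v j)
     + v j * v (j + 1) / 2 * (v j + v (j + 1) - 1) * (v (j + 1) - v j)"

end

theory Submission
  imports Defs
begin

text \<open>The mobility \<open>m(a,b) = a b (a + b - 1) / 2\<close> of two neighbouring values in \<open>[1/2,1]\<close>
  lies in \<open>[0,1/2]\<close>, so a step replaces each value by a convex combination of itself and its
  neighbours (a boundary neighbour has mobility 0) and the band \<open>[1/2,1]\<close> is invariant. The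
  scheme is in conservative flux form, so the mass is preserved, and the energy \<open>\<Sum> u(j)^2\<close>
  drops in each step by at least \<open>\<Sum> (u(j+1) - u(j))^4 / 4\<close>. Hence neighbouring differences
  tend to 0, which together with mass conservation forces every value to the initial mean.\<close>

definition mobility :: "real \<Rightarrow> real \<Rightarrow> real" where
  "mobility a b = a * b / 2 * (a + b - 1)"

definition flux :: "(nat \<Rightarrow> real) \<Rightarrow> nat \<Rightarrow> real" where
  "flux v j = mobility (v j) (v (j + 1)) * (v (j + 1) - v j)"

lemma mobility_commute: "mobility a b = mobility b a"
  unfolding mobility_def by (simp add: algebra_simps)

lemma mobility_zero_left [simp]: "mobility 0 b = 0"
  and mobility_zero_right [simp]: "mobility a 0 = 0"
  unfolding mobility_def by simp_all

lemma lattice_step_mobility_form: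
  "lattice_step v j = v j + mobility (v j) (v (j - 1)) * (v (j - 1) - v j)
                          + mobility (v j) (v (j + 1)) * (v (j + 1) - v j)"
  unfolding lattice_step_def mobility_def by simp

lemma lattice_step_flux_form:
  assumes "1 \<le> j"
  shows "lattice_step v j = v j + flux v j - flux v (j - 1)"
  using assms unfolding lattice_step_mobility_form flux_def
  by (simp add: mobility_commute[of "v j"] algebra_simps)

lemma mobility_bounds:
  fixes a b :: real
  assumes "a \<in> {1/2..1}" "b \<in> {1/2..1}"
  shows "0 \<le> mobility a b" "mobility a b \<le> 1/2"
proof -
  have "0 \<le> a * b" "a * b \<le> 1" "0 \<le> a + b - 1" "a + b - 1 \<le> 1"
    using assms by (auto intro: mult_le_one)
  then show "0 \<le> mobility a b" "mobility a b \<le> 1/2"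
    unfolding mobility_def by (auto intro: mult_le_one)
qed

lemma convex_combination_mem_interval:
  fixes a b c p q lo hi :: real
  assumes b: "b \<in> {lo..hi}" and pq: "0 \<le> p" "0 \<le> q" "p + q \<le> 1"
    and a: "p = 0 \<or> a \<in> {lo..hi}" and c: "q = 0 \<or> c \<in> {lo..hi}"
  shows "b + p * (a - b) + q * (c - b) \<in> {lo..hi}"
proof -
  have "p * lo \<le> p * a \<and> p * a \<le> p * hi"
    using a pq by (auto intro: mult_left_mono)
  moreover have "q * lo \<le> q * c \<and> q * c \<le> q * hi"
    using c pq by (auto intro: mult_left_mono)
  moreover have "(1 - p - q) * lo \<le> (1 - p - q) * b \<and> (1 - p - q) * b \<le> (1 - p - q) * hi"
    using b pq by (auto intro: mult_left_mono)
  ultimately show ?thesis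
    by (simp add: algebra_simps)
qed

lemma lattice_update_in_band:
  fixes a b c :: real
  assumes a: "a = 0 \<or> a \<in> {1/2..1}" and b: "b \<in> {1/2..1}" and c: "c = 0 \<or> c \<in> {1/2..1}"
  shows "b + mobility b a * (a - b) + mobility b c * (c - b) \<in> {1/2..1}"
proof -
  have "0 \<le> mobility b a \<and> mobility b a \<le> 1/2" "0 \<le> mobility b c \<and> mobility b c \<le> 1/2"
    using a b c mobility_bounds[of b a] mobility_bounds[of b c] by auto
  then show ?thesis
    using a b c by (intro convex_combination_mem_interval) auto
qed

lemma flux_dissipation_lower_bound:
  fixes a b :: real
  assumes "a \<in> {1/2..1}" "b \<in> {1/2..1}"
  defines "F \<equiv> mobility a b * (b - a)"
  shows "(b - a) ^ 4 / 4 \<le> 2 * (b - a) * F - 4 * F\<^sup>2"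
proof -
  define m where "m = 2 * mobility a b"
  define d where "d = \<bar>b - a\<bar>"
  \<comment> \<open>The right-hand side is \<open>d\<^sup>2 m (1 - m)\<close>, and \<open>d / 4 \<le> m \<le> 1 - d\<close>.\<close>
  have "d / 4 \<le> m"
  proof -
    have "1/4 \<le> a * b" using assms mult_mono[of "1/2" a "1/2" b] by simp
    moreover have "d \<le> a + b - 1" "0 \<le> d" using assms unfolding d_def by auto
    ultimately have "1/4 * d \<le> a * b * (a + b - 1)" by (intro mult_mono) auto
    then show ?thesis unfolding m_def mobility_def by simp
  qed
  moreover have "m \<le> 1 - d"
  proof -
    have "a * b \<le> min a b" "a + b - 1 \<le> min a b" "0 \<le> a + b - 1"
      using assms by (auto simp: min_def intro: mult_left_le mult_right_le_one_le)
    then have "a * b * (a + b - 1) \<le> min a b * min a b"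
      using assms by (intro mult_mono) auto
    also have "\<dots> \<le> min a b" using assms mult_left_le[of "min a b" "min a b"] by auto
    finally have "a * b * (a + b - 1) \<le> min a b" .
    moreover have "min a b \<le> 1 - d" using assms unfolding d_def by auto
    ultimately have "a * b * (a + b - 1) \<le> 1 - d" by linarith
    then show ?thesis unfolding m_def mobility_def by simp
  qed
  ultimately have "d / 4 * d \<le> m * (1 - m)"
    unfolding d_def by (intro mult_mono) auto
  then have "d\<^sup>2 * (d / 4 * d) \<le> d\<^sup>2 * (m * (1 - m))"
    by (intro mult_left_mono) auto
  moreover have "(b - a) ^ 4 = d\<^sup>2 * d\<^sup>2" "(b - a)\<^sup>2 = d\<^sup>2"
    unfolding d_def by (simp_all add: power4_eq_xxxx power2_eq_square)
  moreover have "2 * (b - a) * F - 4 * F\<^sup>2 = (b - a)\<^sup>2 * (m * (1 - m))"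
    unfolding F_def m_def by (simp add: power2_eq_square algebra_simps)
  ultimately show ?thesis by (simp add: power2_eq_square)
qed

lemma summation_by_parts_zero_boundary:
  fixes v F :: "nat \<Rightarrow> real" and M :: nat
  assumes v0: "v 0 = 0" and vM: "v (Suc M) = 0"
  shows "(\<Sum>j=1..M. v j * (F j - F (j - 1))) = - (\<Sum>j=0..M. (v (j + 1) - v j) * F j)"
proof -
  have "(\<Sum>j=0..M. v j * F j) = (\<Sum>j=1..M. v j * F j)"
    using sum.atLeast_Suc_atMost[of 0 M "\<lambda>j. v j * F j"] v0 by simp
  moreover have "(\<Sum>j=0..M. v (j + 1) * F j) = (\<Sum>j=1..M. v j * F (j - 1))"
  proof -
    have "(\<Sum>j=0..M. v (j + 1) * F j) = (\<Sum>j=Suc 0..Suc M. v j * F (j - 1))"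
      using sum.shift_bounds_cl_Suc_ivl[of "\<lambda>j. v j * F (j - 1)" 0 M] by simp
    also have "\<dots> = (\<Sum>j=1..M. v j * F (j - 1))" using vM by simp
    finally show ?thesis .
  qed
  ultimately show ?thesis
    by (simp add: algebra_simps sum_subtractf)
qed

lemma sum_squares_conservative_update:
  fixes v v' F :: "nat \<Rightarrow> real" and M :: nat
  assumes v0: "v 0 = 0" and vM: "v (Suc M) = 0"
    and update: "\<And>j. 1 \<le> j \<Longrightarrow> j \<le> M \<Longrightarrow> v' j = v j + F j - F (j - 1)"
  shows "(\<Sum>j=1..M. (v' j)\<^sup>2) \<le> (\<Sum>j=1..M. (v j)\<^sup>2)
           - (\<Sum>j=0..M. 2 * (v (j + 1) - v j) * F j - 4 * (F j)\<^sup>2)"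
proof -
  have pointwise: "(v' j)\<^sup>2 \<le> (v j)\<^sup>2 + 2 * (v j * (F j - F (j - 1))) + (2 * (F j)\<^sup>2 + 2 * (F (j - 1))\<^sup>2)"
    if "j \<in> {1..M}" for j
  proof -
    have "(F j - F (j - 1))\<^sup>2 \<le> 2 * (F j)\<^sup>2 + 2 * (F (j - 1))\<^sup>2"
      using sum_squares_ge_zero[of "F j + F (j - 1)" 0]
      by (simp add: power2_eq_square algebra_simps)
    moreover have v'_j: "v' j = v j + F j - F (j - 1)"
      using update that by simp
    have "(v' j)\<^sup>2 = (v j)\<^sup>2 + 2 * (v j * (F j - F (j - 1))) + (F j - F (j - 1))\<^sup>2"
      unfolding v'_j by (simp add: power2_eq_square algebra_simps)
    ultimately show ?thesis by linarith
  qed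
  have "(\<Sum>j=1..M. (F j)\<^sup>2) \<le> (\<Sum>j=0..M. (F j)\<^sup>2)"
    by (rule sum_mono2) auto
  moreover have "(\<Sum>j=1..M. (F (j - 1))\<^sup>2) \<le> (\<Sum>j=0..M. (F j)\<^sup>2)"
  proof -
    have "(\<Sum>j=1..M. (F (j - 1))\<^sup>2) \<le> (\<Sum>j=Suc 0..Suc M. (F (j - 1))\<^sup>2)"
      by (rule sum_mono2) auto
    also have "\<dots> = (\<Sum>j=0..M. (F j)\<^sup>2)"
      using sum.shift_bounds_cl_Suc_ivl[of "\<lambda>j. (F (j - 1))\<^sup>2" 0 M] by simp
    finally show ?thesis .
  qed
  moreover have "(\<Sum>j=1..M. (v' j)\<^sup>2) \<le> (\<Sum>j=1..M. (v j)\<^sup>2 + 2 * (v j * (F j - F (j - 1)))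
      + (2 * (F j)\<^sup>2 + 2 * (F (j - 1))\<^sup>2))"
    by (rule sum_mono) (rule pointwise)
  moreover have "\<dots> = (\<Sum>j=1..M. (v j)\<^sup>2) + 2 * (\<Sum>j=1..M. v j * (F j - F (j - 1)))
      + 2 * (\<Sum>j=1..M. (F j)\<^sup>2) + 2 * (\<Sum>j=1..M. (F (j - 1))\<^sup>2)"
    by (simp add: sum.distrib sum_distrib_left)
  moreover have "(\<Sum>j=0..M. 2 * (v (j + 1) - v j) * F j - 4 * (F j)\<^sup>2)
      = 2 * (\<Sum>j=0..M. (v (j + 1) - v j) * F j) - 4 * (\<Sum>j=0..M. (F j)\<^sup>2)"
    by (simp add: sum_subtractf sum.distrib sum_distrib_left algebra_simps)
  ultimately show ?thesis
    unfolding summation_by_parts_zero_boundary[OF v0 vM] by linarith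
qed

lemma tendsto_average_if_adjacent_differences_vanish:
  fixes w :: "nat \<Rightarrow> nat \<Rightarrow> real" and M j :: nat
  assumes mass: "\<And>k. (\<Sum>i=1..M. w k i) = S"
    and adjacent: "\<And>i. 1 \<le> i \<Longrightarrow> i < M \<Longrightarrow> (\<lambda>k. w k (i + 1) - w k i) \<longlonglongrightarrow> 0"
    and j: "1 \<le> j" "j \<le> M"
  shows "(\<lambda>k. w k j) \<longlonglongrightarrow> S / real M"
proof -
  have chain: "(\<lambda>k. w k (i + d) - w k i) \<longlonglongrightarrow> 0" if "1 \<le> i" "i + d \<le> M" for i d
    using that
  proof (induction d)
    case (Suc d)
    then have "(\<lambda>k. (w k (i + d + 1) - w k (i + d)) + (w k (i + d) - w k i)) \<longlonglongrightarrow> 0 + 0"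
      by (intro tendsto_add adjacent) auto
    then show ?case by simp
  qed simp
  have to_j: "(\<lambda>k. w k j - w k i) \<longlonglongrightarrow> 0" if "i \<in> {1..M}" for i
  proof (cases "i \<le> j")
    case True
    then show ?thesis using chain[of i "j - i"] that j by simp
  next
    case False
    then have "(\<lambda>k. - (w k i - w k j)) \<longlonglongrightarrow> - 0"
      using chain[of j "i - j"] that j by (intro tendsto_minus) simp
    then show ?thesis by simp
  qed
  have "(\<lambda>k. (\<Sum>i=1..M. w k j - w k i) / real M) \<longlonglongrightarrow> (\<Sum>i=1..M. 0) / real M"
    by (intro tendsto_divide tendsto_sum to_j) (use j in auto)
  moreover have "(\<Sum>i=1..M. w k j - w k i) / real M = w k j - S / real M" for k
    using mass[of k] j by (simp add: sum_subtractf field_simps)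
  ultimately have "(\<lambda>k. w k j - S / real M) \<longlonglongrightarrow> 0" by simp
  then show ?thesis by (simp add: LIM_zero_iff)
qed

locale lattice_scheme =
  fixes w :: "nat \<Rightarrow> nat \<Rightarrow> real" and M :: nat
  assumes left_boundary: "w k 0 = 0"
    and right_boundary: "w k (Suc M) = 0"
    and step: "1 \<le> j \<Longrightarrow> j \<le> M \<Longrightarrow> w (Suc k) j = lattice_step (w k) j"
    and initial_in_band: "1 \<le> j \<Longrightarrow> j \<le> M \<Longrightarrow> w 0 j \<in> {1/2..1}"
begin

lemma in_band: "1 \<le> j \<Longrightarrow> j \<le> M \<Longrightarrow> w k j \<in> {1/2..1}"
proof (induction k arbitrary: j)
  case 0
  then show ?case by (rule initial_in_band)
next
  case (Suc k)
  have neighbour: "w k i = 0 \<or> w k i \<in> {1/2..1}" if "i \<le> Suc M" for i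
    using Suc.IH[of i] left_boundary right_boundary that
    by (cases "i = 0"; cases "i = Suc M") auto
  have "w k j + mobility (w k j) (w k (j - 1)) * (w k (j - 1) - w k j)
          + mobility (w k j) (w k (j + 1)) * (w k (j + 1) - w k j) \<in> {1/2..1}"
    using Suc.prems by (intro lattice_update_in_band neighbour Suc.IH) auto
  then show ?case
    using Suc.prems by (simp add: step lattice_step_mobility_form)
qed

lemma flux_left_boundary [simp]: "flux (w k) 0 = 0"
  and flux_right_boundary [simp]: "flux (w k) M = 0"
  unfolding flux_def by (simp_all add: left_boundary right_boundary)

lemma step_flux_form: "1 \<le> j \<Longrightarrow> j \<le> M \<Longrightarrow> w (Suc k) j = w k j + flux (w k) j - flux (w k) (j - 1)"
  by (simp add: step lattice_step_flux_form)

lemma mass_conserved: "(\<Sum>i=1..M. w k i) = (\<Sum>i=1..M. w 0 i)"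
proof (induction k)
  case (Suc k)
  have "(\<Sum>i=1..M. w (Suc k) i) = (\<Sum>i=1..M. w k i + (flux (w k) i - flux (w k) (i - 1)))"
    by (intro sum.cong) (auto simp: step_flux_form)
  also have "\<dots> = (\<Sum>i=1..M. w k i)"
    unfolding sum.distrib using sum_telescope''[of 0 M "flux (w k)"] by simp
  finally show ?case using Suc.IH by simp
qed simp

definition energy :: "nat \<Rightarrow> real" where
  "energy k = (\<Sum>i=1..M. (w k i)\<^sup>2)"

lemma energy_dissipation:
  "energy (Suc k) + (\<Sum>i=1..<M. (w k (i + 1) - w k i) ^ 4 / 4) \<le> energy k"
proof -
  define T where "T i = 2 * (w k (i + 1) - w k i) * flux (w k) i - 4 * (flux (w k) i)\<^sup>2" for i
  have T_lower: "(w k (i + 1) - w k i) ^ 4 / 4 \<le> T i" if "1 \<le> i" "i < M" for i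
    using flux_dissipation_lower_bound[OF in_band in_band] that unfolding T_def flux_def by simp
  have T_nonneg: "0 \<le> T i" if "i \<le> M" for i
  proof (cases "i = 0 \<or> i = M")
    case True
    then show ?thesis unfolding T_def by auto
  next
    case False
    then have "(w k (i + 1) - w k i) ^ 4 / 4 \<le> T i" using that by (intro T_lower) auto
    moreover have "0 \<le> (w k (i + 1) - w k i) ^ 4 / 4" by simp
    ultimately show ?thesis by linarith
  qed
  have "(\<Sum>i=1..<M. (w k (i + 1) - w k i) ^ 4 / 4) \<le> (\<Sum>i=1..<M. T i)"
    by (intro sum_mono T_lower) auto
  also have "\<dots> \<le> (\<Sum>i=0..M. T i)"
    by (intro sum_mono2 T_nonneg) auto
  also have "\<dots> \<le> energy k - energy (Suc k)"
    using sum_squares_conservative_update[of "w k" M "w (Suc k)" "flux (w k)"]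
    unfolding energy_def T_def by (simp add: left_boundary right_boundary step_flux_form)
  finally show ?thesis by simp
qed

lemma adjacent_differences_tendsto_zero:
  assumes "1 \<le> i" "i < M"
  shows "(\<lambda>k. w k (i + 1) - w k i) \<longlonglongrightarrow> 0"
proof -
  have dissipated: "(w k (i + 1) - w k i) ^ 4 / 4 \<le> energy k - energy (Suc k)" for k
  proof -
    have "(w k (i + 1) - w k i) ^ 4 / 4 \<le> (\<Sum>i=1..<M. (w k (i + 1) - w k i) ^ 4 / 4)"
      using assms by (intro member_le_sum) auto
    then show ?thesis using energy_dissipation[of k] by linarith
  qed
  have "decseq energy"
  proof (rule decseq_SucI)
    fix k
    have "0 \<le> (\<Sum>i=1..<M. (w k (i + 1) - w k i) ^ 4 / 4)" by (intro sum_nonneg) simp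
    then show "energy (Suc k) \<le> energy k" using energy_dissipation[of k] by linarith
  qed
  moreover have "\<forall>k. 0 \<le> energy k" unfolding energy_def by (simp add: sum_nonneg)
  ultimately obtain L where "energy \<longlonglongrightarrow> L" using decseq_convergent by blast
  then have "(\<lambda>k. energy k - energy (Suc k)) \<longlonglongrightarrow> 0"
    using tendsto_diff[OF _ LIMSEQ_Suc] by fastforce
  then have "(\<lambda>k. (w k (i + 1) - w k i) ^ 4 / 4) \<longlonglongrightarrow> 0"
    using tendsto_sandwich[of "\<lambda>_. 0" "\<lambda>k. (w k (i + 1) - w k i) ^ 4 / 4" sequentially
        "\<lambda>k. energy k - energy (Suc k)" 0] dissipated
    by (simp add: always_eventually)
  then have "(\<lambda>k. (w k (i + 1) - w k i) ^ 4) \<longlonglongrightarrow> 0"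
    using tendsto_mult_right_zero[of _ sequentially 4] by simp
  then show ?thesis by simp
qed

lemma tendsto_initial_mean:
  assumes "1 \<le> j" "j \<le> M"
  shows "(\<lambda>k. w k j) \<longlonglongrightarrow> (\<Sum>i=1..M. w 0 i) / real M"
  using mass_conserved adjacent_differences_tendsto_zero assms
  by (rule tendsto_average_if_adjacent_differences_vanish)

end

theorem theorem3p5:
  fixes N :: nat and \<tau> :: real and u :: "nat \<Rightarrow> real \<Rightarrow> real"
  assumes N: "N \<ge> 2"
    and tau: "\<tau> > 0"
    and bdry0: "\<And>k::nat. u 0 (real k * \<tau>) = 0"
    and bdryN: "\<And>k::nat. u N (real k * \<tau>) = 0"
    and iter: "\<And>(k::nat) j. 1 \<le> j \<Longrightarrow> j \<le> N - 1 \<Longrightarrow>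
         u j (real k * \<tau> + \<tau>) = lattice_step (\<lambda>i. u i (real k * \<tau>)) j"
    and init: "\<And>j. 1 \<le> j \<Longrightarrow> j \<le> N - 1 \<Longrightarrow> 1/2 \<le> u j 0 \<and> u j 0 \<le> 1"
  shows "\<forall>j. 1 \<le> j \<and> j \<le> N - 1 \<longrightarrow>
     (\<lambda>k::nat. u j (real k * \<tau>)) \<longlonglongrightarrow> (\<Sum>i=1..N-1. u i 0) / real (N - 1)"
proof (intro allI impI)
  fix j assume j: "1 \<le> j \<and> j \<le> N - 1"
  \<comment> \<open>Only the grid values enter, so the sign of \<open>\<tau>\<close> plays no role.\<close>
  define w where "w k i = u i (real k * \<tau>)" for k i
  interpret lattice_scheme w "N - 1"
  proof
    show "w k 0 = 0" for k unfolding w_def by (rule bdry0)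
    show "w k (Suc (N - 1)) = 0" for k unfolding w_def using N bdryN by simp
    show "w (Suc k) i = lattice_step (w k) i" if "1 \<le> i" "i \<le> N - 1" for k i
      using iter[OF that, of k] unfolding w_def by (simp add: distrib_right add.commute)
    show "w 0 i \<in> {1/2..1}" if "1 \<le> i" "i \<le> N - 1" for i
      using init[OF that] unfolding w_def by simp
  qed
  show "(\<lambda>k::nat. u j (real k * \<tau>)) \<longlonglongrightarrow> (\<Sum>i=1..N-1. u i 0) / real (N - 1)"
    using tendsto_initial_mean[of j] j unfolding w_def by simp
qed

end
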